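(* In the setting of the context, with $\alpha_k=\frac a{(b+k)^\gamma}$, $\gamma\in(\frac12,1)$, $a>0$, $b>1$, $\frac a{b^\gamma}\le\frac1{2M\tilde L}$, for every $n\ge0$ and $0\le k\le n$, $$B_k\le\frac{a^2M\tilde Lc(A)\sigma_{\max}^2}{2\gamma-1}(b+k-1)^{1-2\gamma}\exp\Big(\frac{a\sigma_{\min}^2}{1-\gamma}(b+k+1)^{1-\gamma}\Big)\exp\Big(-\frac{a\sigma_{\min}^2}{1-\gamma}(b+n+1)^{1-\gamma}\Big).$$
   Context: Standing setting: $M\ge N$, $A\in\mathbb{R}^{M\times N}$ of full column rank with rows $a_1,\dots,a_M$; singular values $\sigma_1\ge\dots\ge\sigma_N>0$, $\sigma_{\max}=\sigma_1$, $\sigma_{\min}=\sigma_N$, $c(A)=\sigma_{\max}^2/\sigma_{\min}^2$, $\tilde L=\max_i\|a_i\|^2$. Fix $\ell$. For $\alpha>0$: $A(\alpha)=1-2\alpha\sigma_\ell^2$, $B(\alpha)=\alpha^2M\tilde Lc(A)\sigma_{\max}^2$, $p(\alpha)=1-\alpha\sigma_{\min}^2$. For fixed $n$ and $0\le k\le n$: $B_k=\sum_{j=k}^n\Big(\prod_{i=j+1}^nA(\alpha_i)\Big)B(\alpha_j)\Big(\prod_{i=k}^{j-1}p(\alpha_i)\Big)$ (empty products $1$). Step-size scalars $a,b$ are unrelated to the rows $a_i$. *)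

theory Defs
  imports "HOL-Analysis.Analysis"
begin

text \<open>sigma is the (1-indexed, non-increasing) list of singular values of the M x N matrix A
  (N = CARD('n) \<le> M = CARD('m)), witnessed by a thin SVD  A = U Sigma V^T with U having
  orthonormal columns and V orthogonal.\<close>
definition singular_values :: "real^'n^'m \<Rightarrow> (nat \<Rightarrow> real) \<Rightarrow> bool" where
  "singular_values A \<sigma> \<longleftrightarrow>
     (\<forall>i j. 1 \<le> i \<longrightarrow> i \<le> j \<longrightarrow> j \<le> CARD('n) \<longrightarrow> \<sigma> j \<le> \<sigma> i) \<and>
     (\<forall>i. 1 \<le> i \<longrightarrow> i \<le> CARD('n) \<longrightarrow> 0 \<le> \<sigma> i) \<and>
     (\<exists>(U::real^'n^'m) (V::real^'n^'n) (e::'n \<Rightarrow> nat).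
        transpose U ** U = mat 1 \<and> orthogonal_matrix V \<and>
        bij_betw e UNIV {1..CARD('n)} \<and>
        A = U ** (\<chi> i j. if i = j then \<sigma> (e i) else 0) ** transpose V)"

definition Ltilde :: "real^'n^'m \<Rightarrow> real" where
  "Ltilde A = Max {(norm (row i A))^2 | i. True}"

definition condA :: "real \<Rightarrow> real \<Rightarrow> real" where
  "condA smax smin = smax^2 / smin^2"

definition Afac :: "real \<Rightarrow> real \<Rightarrow> real" where
  "Afac sl \<alpha> = 1 - 2 * \<alpha> * sl^2"

definition Bfac :: "real \<Rightarrow> real \<Rightarrow> real \<Rightarrow> real \<Rightarrow> real \<Rightarrow> real" where
  "Bfac M Lt smax smin \<alpha> = \<alpha>^2 * M * Lt * condA smax smin * smax^2"

definition pfac :: "real \<Rightarrow> real \<Rightarrow> real" where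
  "pfac smin \<alpha> = 1 - \<alpha> * smin^2"

definition Bk :: "real \<Rightarrow> real \<Rightarrow> real \<Rightarrow> real \<Rightarrow> real \<Rightarrow> (nat \<Rightarrow> real) \<Rightarrow> nat \<Rightarrow> nat \<Rightarrow> real" where
  "Bk sl M Lt smax smin \<alpha> n k =
     (\<Sum>j\<in>{k..n}. (\<Prod>i\<in>{j+1..n}. Afac sl (\<alpha> i)) * Bfac M Lt smax smin (\<alpha> j)
                   * (\<Prod>i\<in>{k..<j}. pfac smin (\<alpha> i)))"

end

theory Submission
  imports Defs
begin

text \<open>Because \<sigma>_l^2 \<le> M L, the step sizes satisfy \<alpha>_i \<sigma>_l^2 \<le> 1/2, so every factor A(\<alpha>_i) and
  p(\<alpha>_i) lies in [0, exp (-\<sigma>_min^2 \<alpha>_i)]. Partial sums of the step sizes dominate the increments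
  of their antiderivative F(x) = a (b + x)^(1-\<gamma>) / (1-\<gamma>), so the two products in each summand of
  B_k combine into the common factor exp (-\<sigma>_min^2 (F(n+1) - F(k+1))). What remains is \<Sum> \<alpha>_j^2,
  bounded by the integral of a^2 (b + x)^(-2\<gamma>) over [k-1, \<infinity>).\<close>

lemma norm_matrix_vector_mult_square_le:
  fixes A :: "real^'n^'m" and v :: "real^'n"
  assumes "norm v = 1"
  shows "(norm (A *v v))^2 \<le> real CARD('m) * Ltilde A"
proof -
  have "(norm (A *v v))^2 = (\<Sum>i\<in>UNIV. (row i A \<bullet> v)^2)"
    unfolding power2_norm_eq_inner
    by (simp add: inner_vec_def matrix_vector_mul_component row_def power2_eq_square)
  also have "\<dots> \<le> (\<Sum>i\<in>(UNIV::'m set). Ltilde A)"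
  proof (rule sum_mono)
    fix i :: 'm
    have "\<bar>row i A \<bullet> v\<bar> \<le> norm (row i A)"
      using Cauchy_Schwarz_ineq2[of "row i A" v] assms by simp
    then have "(row i A \<bullet> v)^2 \<le> (norm (row i A))^2"
      by (metis abs_ge_zero power2_abs power_mono)
    also have "\<dots> \<le> Ltilde A"
      unfolding Ltilde_def setcompr_eq_image by (rule Max_ge) auto
    finally show "(row i A \<bullet> v)^2 \<le> Ltilde A" .
  qed
  finally show ?thesis by simp
qed

lemma singular_value_square_le:
  fixes A :: "real^'n^'m"
  assumes "singular_values A \<sigma>" and "1 \<le> l" "l \<le> CARD('n)"
  shows "(\<sigma> l)^2 \<le> real CARD('m) * Ltilde A"
proof -
  obtain U :: "real^'n^'m" and V :: "real^'n^'n" and e :: "'n \<Rightarrow> nat" where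
    U: "transpose U ** U = mat 1" and V: "orthogonal_matrix V"
    and e: "bij_betw e UNIV {1..CARD('n)}"
    and A: "A = U ** (\<chi> i j. if i = j then \<sigma> (e i) else 0) ** transpose V"
    using assms(1) unfolding singular_values_def by blast
  obtain c where c: "e c = l"
    using e assms(2,3) unfolding bij_betw_def by (metis atLeastAtMost_iff imageE)
  have "transpose V *v column c V = axis c 1"
    using V unfolding orthogonal_matrix matrix_vector_mult_basis[symmetric]
    by (simp add: matrix_vector_mul_assoc)
  moreover have "(\<chi> i j. if i = j then \<sigma> (e i) else 0) *v axis c 1 = \<sigma> l *s axis c (1::real)"
    by (simp add: vec_eq_iff matrix_vector_mult_def axis_def c mult_delta_right)
  ultimately have "A *v column c V = \<sigma> l *s column c U"
    unfolding A matrix_vector_mul_assoc[symmetric]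
    by (simp add: matrix_vector_mult_basis[symmetric] vector_scalar_commute)
  moreover have "norm (column c U) = 1"
    using arg_cong[OF U, of "\<lambda>M. M $ c $ c"]
    by (simp add: matrix_mult_transpose_dot_column mat_def norm_eq_1)
  moreover have "norm (column c V) = 1"
    using V unfolding orthogonal_matrix_orthonormal_columns by blast
  ultimately show ?thesis
    using norm_matrix_vector_mult_square_le[of "column c V" A]
    by (simp add: scalar_mult_eq_scaleR)
qed

lemma powr_add_one_diff_le:
  fixes t q :: real
  assumes "0 < t" "0 < q" "q \<le> 1"
  shows "(t + 1) powr q - t powr q \<le> q * t powr (q - 1)"
proof -
  have "((\<lambda>x. x powr q) has_real_derivative q * x powr (q - 1)) (at x)"
    if "t \<le> x" "x \<le> t + 1" for x
    using assms that by (intro has_real_derivative_powr) auto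
  from MVT2[of t "t + 1", OF _ this] obtain z where z: "t < z" "z < t + 1"
    and eq: "(t + 1) powr q - t powr q = (t + 1 - t) * (q * z powr (q - 1))"
    by auto
  have "z powr (q - 1) \<le> t powr (q - 1)"
    using z assms by (intro powr_mono2') auto
  then show ?thesis using eq assms by (simp add: mult_left_mono)
qed

lemma powr_neg_diff_ge:
  fixes t r :: real
  assumes "0 < t" "0 < r"
  shows "r * (t + 1) powr (- r - 1) \<le> t powr (- r) - (t + 1) powr (- r)"
proof -
  have "((\<lambda>x. x powr (- r)) has_real_derivative - r * x powr (- r - 1)) (at x)"
    if "t \<le> x" "x \<le> t + 1" for x
    using assms that has_real_derivative_powr[of x "- r"] by auto
  from MVT2[of t "t + 1", OF _ this] obtain z where z: "t < z" "z < t + 1"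
    and eq: "(t + 1) powr (- r) - t powr (- r) = (t + 1 - t) * (- r * z powr (- r - 1))"
    by auto
  have "(t + 1) powr (- r - 1) \<le> z powr (- r - 1)"
    using z assms by (intro powr_mono2') auto
  then have "r * (t + 1) powr (- r - 1) \<le> r * z powr (- r - 1)"
    using assms by (simp add: mult_left_mono)
  then show ?thesis using eq by simp
qed

lemma sum_powr_neg_le_tail_integral:
  fixes b r :: real
  assumes "0 < r" "1 < b" "k \<le> n"
  shows "(\<Sum>j\<in>{k..n}. (b + real j) powr (- (r + 1))) \<le> (b + real k - 1) powr (- r) / r"
proof -
  define H where "H j = - ((b + real j - 1) powr (- r)) / r" for j :: nat
  have "(b + real j) powr (- (r + 1)) \<le> H (Suc j) - H j" for j
  proof -
    have "r * (b + real j) powr (- r - 1) \<le> (b + real j - 1) powr (- r) - (b + real j) powr (- r)"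
      using powr_neg_diff_ge[of "b + real j - 1" r] assms by simp
    then show ?thesis
      using assms by (simp add: H_def pos_le_divide_eq diff_divide_distrib[symmetric] mult.commute)
  qed
  then have "(\<Sum>j\<in>{k..n}. (b + real j) powr (- (r + 1))) \<le> (\<Sum>j\<in>{k..n}. H (Suc j) - H j)"
    by (rule sum_mono)
  also have "\<dots> = H (Suc n) - H k"
    using assms(3) by (simp add: sum_Suc_diff)
  also have "\<dots> \<le> (b + real k - 1) powr (- r) / r"
    using assms by (simp add: H_def)
  finally show ?thesis .
qed

lemma Afac_bounds:
  assumes "0 \<le> \<alpha>" "\<alpha> * sl^2 \<le> 1/2" "s^2 \<le> sl^2"
  shows "0 \<le> Afac sl \<alpha> \<and> Afac sl \<alpha> \<le> exp (- (s^2 * \<alpha>))"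
proof -
  have "\<alpha> * s^2 \<le> \<alpha> * sl^2" using assms by (simp add: mult_left_mono)
  moreover have "1 - \<alpha> * s^2 \<le> exp (- (s^2 * \<alpha>))"
    using exp_ge_add_one_self[of "- (s^2 * \<alpha>)"] by (simp add: mult.commute)
  moreover have "0 \<le> \<alpha> * s^2" using assms by simp
  moreover have "Afac sl \<alpha> = 1 - 2 * (\<alpha> * sl^2)" by (simp add: Afac_def)
  ultimately show ?thesis using assms by linarith
qed

lemma pfac_bounds:
  assumes "0 \<le> \<alpha>" "\<alpha> * s^2 \<le> 1"
  shows "0 \<le> pfac s \<alpha> \<and> pfac s \<alpha> \<le> exp (- (s^2 * \<alpha>))"
  using assms exp_ge_add_one_self[of "- (s^2 * \<alpha>)"] by (simp add: pfac_def mult.commute)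

lemma prod_le_exp_neg_sum:
  fixes f g :: "'a \<Rightarrow> real"
  assumes "\<And>i. i \<in> I \<Longrightarrow> 0 \<le> f i \<and> f i \<le> exp (- g i)"
  shows "prod f I \<le> exp (- sum g I)"
proof -
  have "prod f I \<le> (\<Prod>i\<in>I. exp (- g i))"
    using assms by (intro prod_mono) auto
  then show ?thesis by (cases "finite I") (simp_all add: exp_sum sum_negf[symmetric])
qed

lemma telescoping_le_sum:
  fixes F \<alpha> :: "nat \<Rightarrow> real"
  assumes "\<And>i. F (Suc i) - F i \<le> \<alpha> i" "m \<le> n"
  shows "F n - F m \<le> sum \<alpha> {m..<n}"
proof -
  have "F n - F m = (\<Sum>i\<in>{m..<n}. F (Suc i) - F i)"
    using assms(2) by (simp add: sum_Suc_diff')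
  also have "\<dots> \<le> sum \<alpha> {m..<n}"
    using assms(1) by (rule sum_mono)
  finally show ?thesis .
qed

lemma Bk_le_exp_sum_square:
  fixes \<alpha> F :: "nat \<Rightarrow> real"
  assumes s: "s^2 \<le> sl^2" and nonneg: "0 \<le> M * L"
    and \<alpha>: "\<And>i. 0 \<le> \<alpha> i" "\<And>i. \<alpha> i * sl^2 \<le> 1/2" "antimono \<alpha>"
    and F: "\<And>i. F (Suc i) - F i \<le> \<alpha> i"
  shows "Bk sl M L S s \<alpha> n k
    \<le> M * L * condA S s * S^2 * exp (- (s^2 * (F (Suc n) - F (Suc k)))) * (\<Sum>j\<in>{k..n}. (\<alpha> j)^2)"
proof -
  define C where "C = M * L * condA S s * S^2"
  define E where "E m m' = exp (- (s^2 * (F m' - F m)))" for m m'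
  have C: "0 \<le> C" using nonneg by (simp add: C_def condA_def)
  have Afac: "0 \<le> Afac sl (\<alpha> i) \<and> Afac sl (\<alpha> i) \<le> exp (- (s^2 * \<alpha> i))" for i
    using Afac_bounds[OF \<alpha>(1,2) s] .
  have pfac: "0 \<le> pfac s (\<alpha> i) \<and> pfac s (\<alpha> i) \<le> exp (- (s^2 * \<alpha> i))" for i
  proof (rule pfac_bounds)
    have "\<alpha> i * s^2 \<le> \<alpha> i * sl^2" using s \<alpha>(1) by (rule mult_left_mono)
    then show "\<alpha> i * s^2 \<le> 1" using \<alpha>(2)[of i] by linarith
  qed (rule \<alpha>(1))
  have later: "(\<Prod>i\<in>{j+1..n}. Afac sl (\<alpha> i)) \<le> E (Suc j) (Suc n)" if "j \<le> n" for j
  proof -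
    have "F (Suc n) - F (Suc j) \<le> sum \<alpha> {Suc j..<Suc n}"
      using telescoping_le_sum[of F \<alpha>, OF F, of "Suc _" "Suc _"] that by simp
    then have "- (s^2 * sum \<alpha> {j+1..n}) \<le> - (s^2 * (F (Suc n) - F (Suc j)))"
      by (simp add: atLeastLessThanSuc_atLeastAtMost mult_left_mono)
    moreover have "(\<Prod>i\<in>{j+1..n}. Afac sl (\<alpha> i)) \<le> exp (- (\<Sum>i\<in>{j+1..n}. s^2 * \<alpha> i))"
      using Afac by (intro prod_le_exp_neg_sum)
    ultimately show ?thesis
      unfolding E_def sum_distrib_left[symmetric] by (meson exp_le_cancel_iff order_trans)
  qed
  \<comment> \<open>This product starts at \<open>k\<close> rather than \<open>k+1\<close>; monotonicity of \<open>\<alpha>\<close> absorbs the shift.\<close>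
  have earlier: "(\<Prod>i\<in>{k..<j}. pfac s (\<alpha> i)) \<le> E (Suc k) (Suc j)" if "k \<le> j" for j
  proof -
    have "F (Suc j) - F (Suc k) \<le> sum \<alpha> {Suc k..<Suc j}"
      using telescoping_le_sum[of F \<alpha>, OF F, of "Suc _" "Suc _"] that by simp
    also have "\<dots> = (\<Sum>i\<in>{k..<j}. \<alpha> (Suc i))"
      by (rule sum.shift_bounds_Suc_ivl)
    also have "\<dots> \<le> sum \<alpha> {k..<j}"
      using \<alpha>(3) by (intro sum_mono) (simp add: antimonoD)
    finally have "- (s^2 * sum \<alpha> {k..<j}) \<le> - (s^2 * (F (Suc j) - F (Suc k)))"
      by (simp add: mult_left_mono)
    moreover have "(\<Prod>i\<in>{k..<j}. pfac s (\<alpha> i)) \<le> exp (- (\<Sum>i\<in>{k..<j}. s^2 * \<alpha> i))"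
      using pfac by (intro prod_le_exp_neg_sum)
    ultimately show ?thesis
      unfolding E_def sum_distrib_left[symmetric] by (meson exp_le_cancel_iff order_trans)
  qed
  have "(\<Prod>i\<in>{j+1..n}. Afac sl (\<alpha> i)) * Bfac M L S s (\<alpha> j) * (\<Prod>i\<in>{k..<j}. pfac s (\<alpha> i))
      \<le> C * E (Suc k) (Suc n) * (\<alpha> j)^2" if "j \<in> {k..n}" for j
  proof -
    have "(\<Prod>i\<in>{j+1..n}. Afac sl (\<alpha> i)) * (\<Prod>i\<in>{k..<j}. pfac s (\<alpha> i))
        \<le> E (Suc j) (Suc n) * E (Suc k) (Suc j)"
      using that later earlier Afac pfac by (intro mult_mono prod_nonneg) (auto simp: E_def)
    also have "\<dots> = E (Suc k) (Suc n)"
      by (simp add: E_def exp_add[symmetric] algebra_simps)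
    finally have "C * (\<alpha> j)^2 * ((\<Prod>i\<in>{j+1..n}. Afac sl (\<alpha> i)) * (\<Prod>i\<in>{k..<j}. pfac s (\<alpha> i)))
        \<le> C * (\<alpha> j)^2 * E (Suc k) (Suc n)"
      using C by (simp add: mult_left_mono)
    then show ?thesis by (simp add: Bfac_def C_def mult_ac)
  qed
  then have "Bk sl M L S s \<alpha> n k \<le> (\<Sum>j\<in>{k..n}. C * E (Suc k) (Suc n) * (\<alpha> j)^2)"
    unfolding Bk_def by (rule sum_mono)
  then show ?thesis by (simp add: C_def E_def sum_distrib_left)
qed

lemma antimono_poly_step:
  fixes a b \<gamma> :: real
  assumes "0 \<le> a" "0 \<le> \<gamma>" "0 < b"
  shows "antimono (\<lambda>j::nat. a / (b + real j) powr \<gamma>)"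
proof (rule antimonoI)
  fix i j :: nat
  assume "i \<le> j"
  then show "a / (b + real j) powr \<gamma> \<le> a / (b + real i) powr \<gamma>"
    using assms by (intro divide_left_mono powr_mono2 mult_pos_pos) auto
qed

lemma poly_step_increment_le:
  fixes a b \<gamma> :: real
  assumes "0 \<le> a" "0 < \<gamma>" "\<gamma> < 1" "0 < b"
  shows "a / (1 - \<gamma>) * (b + real (Suc i)) powr (1 - \<gamma>) - a / (1 - \<gamma>) * (b + real i) powr (1 - \<gamma>)
    \<le> a / (b + real i) powr \<gamma>"
proof -
  have "(b + real i + 1) powr (1 - \<gamma>) - (b + real i) powr (1 - \<gamma>) \<le> (1 - \<gamma>) * (b + real i) powr (- \<gamma>)"
    using powr_add_one_diff_le[of "b + real i" "1 - \<gamma>"] assms by simp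
  then have "a / (1 - \<gamma>) * ((b + real i + 1) powr (1 - \<gamma>) - (b + real i) powr (1 - \<gamma>))
      \<le> a * (b + real i) powr (- \<gamma>)"
    using assms mult_left_mono[of _ _ "a / (1 - \<gamma>)"] by fastforce
  then show ?thesis
    using assms by (simp add: right_diff_distrib powr_minus_divide add_ac)
qed

lemma sum_poly_step_square_le:
  fixes a b \<gamma> :: real
  assumes "1/2 < \<gamma>" "1 < b" "k \<le> n"
  shows "(\<Sum>j\<in>{k..n}. (a / (b + real j) powr \<gamma>)^2)
    \<le> a^2 / (2 * \<gamma> - 1) * (b + real k - 1) powr (1 - 2 * \<gamma>)"
proof -
  have "(a / (b + real j) powr \<gamma>)^2 = a^2 * (b + real j) powr (- ((2 * \<gamma> - 1) + 1))" for j
    using assms by (simp add: power_divide powr_minus_divide powr_realpow[symmetric] powr_powr mult.commute)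
  then have "(\<Sum>j\<in>{k..n}. (a / (b + real j) powr \<gamma>)^2)
      = a^2 * (\<Sum>j\<in>{k..n}. (b + real j) powr (- ((2 * \<gamma> - 1) + 1)))"
    by (simp add: sum_distrib_left)
  also have "\<dots> \<le> a^2 * ((b + real k - 1) powr (- (2 * \<gamma> - 1)) / (2 * \<gamma> - 1))"
    using sum_powr_neg_le_tail_integral[of "2 * \<gamma> - 1" b k n] assms by (intro mult_left_mono) auto
  finally show ?thesis by simp
qed

lemma poly_step_mult_le_half:
  fixes a b \<gamma> x R :: real
  assumes "0 < a" "0 \<le> \<gamma>" "0 < b" "a / b powr \<gamma> \<le> 1 / (2 * R)" "0 \<le> x" "x \<le> R"
  shows "a / (b + real i) powr \<gamma> * x \<le> 1/2"
proof -
  have "0 < a / b powr \<gamma>" using assms(1,3) by simp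
  then have "0 < 1 / (2 * R)" using assms(4) by linarith
  then have "0 < R" by simp
  have "a / (b + real i) powr \<gamma> \<le> a / b powr \<gamma>"
    using antimono_poly_step[of a \<gamma> b] assms by (auto dest: antimonoD[of _ 0 i])
  then have "a / (b + real i) powr \<gamma> * x \<le> 1 / (2 * R) * R"
    using assms \<open>0 < R\<close> by (intro mult_mono) auto
  then show ?thesis using \<open>0 < R\<close> by simp
qed

theorem lemma21:
  fixes A :: "real^'n^'m" and \<sigma> :: "nat \<Rightarrow> real" and l :: nat
    and a b \<gamma> :: real and n k :: nat
  assumes "CARD('n) \<le> CARD('m)"
    and "rank A = CARD('n)"
    and "singular_values A \<sigma>"
    and "1 \<le> l" and "l \<le> CARD('n)"
    and "1/2 < \<gamma>" and "\<gamma> < 1" and "a > 0" and "b > 1"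
    and "a / b powr \<gamma> \<le> 1 / (2 * real CARD('m) * Ltilde A)"
    and "k \<le> n"
  shows "Bk (\<sigma> l) (real CARD('m)) (Ltilde A) (\<sigma> 1) (\<sigma> CARD('n))
            (\<lambda>j. a / (b + real j) powr \<gamma>) n k
         \<le> a^2 * real CARD('m) * Ltilde A * condA (\<sigma> 1) (\<sigma> CARD('n)) * (\<sigma> 1)^2 / (2*\<gamma> - 1)
            * (b + real k - 1) powr (1 - 2*\<gamma>)
            * exp (a * (\<sigma> CARD('n))^2 / (1 - \<gamma>) * (b + real k + 1) powr (1 - \<gamma>))
            * exp (- (a * (\<sigma> CARD('n))^2 / (1 - \<gamma>) * (b + real n + 1) powr (1 - \<gamma>)))"
proof -
  define \<alpha> where "\<alpha> j = a / (b + real j) powr \<gamma>" for j :: nat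
  define F where "F i = a / (1 - \<gamma>) * (b + real i) powr (1 - \<gamma>)" for i :: nat
  have s: "(\<sigma> CARD('n))^2 \<le> (\<sigma> l)^2"
    using assms(3-5) unfolding singular_values_def by (auto intro: power_mono)
  have "0 < a / b powr \<gamma>" using assms(8,9) by simp
  then have "0 < 1 / (2 * real CARD('m) * Ltilde A)" using assms(10) by linarith
  then have pos: "0 < real CARD('m) * Ltilde A" by (simp add: zero_less_mult_iff)
  have step: "\<alpha> i * (\<sigma> l)^2 \<le> 1/2" for i
    unfolding \<alpha>_def using assms(6,8,9,10) singular_value_square_le[OF assms(3-5)]
    by (intro poly_step_mult_le_half) (auto simp: mult.assoc)
  have F: "F (Suc i) - F i \<le> \<alpha> i" for i
    unfolding F_def \<alpha>_def using assms(6-9) by (intro poly_step_increment_le) auto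
  have "antimono \<alpha>"
    unfolding \<alpha>_def[abs_def] using assms(6-9) by (intro antimono_poly_step) auto
  moreover have "0 \<le> \<alpha> i" for i
    using assms(8,9) by (simp add: \<alpha>_def)
  ultimately have "Bk (\<sigma> l) (real CARD('m)) (Ltilde A) (\<sigma> 1) (\<sigma> CARD('n)) \<alpha> n k
      \<le> real CARD('m) * Ltilde A * condA (\<sigma> 1) (\<sigma> CARD('n)) * (\<sigma> 1)^2
        * exp (- ((\<sigma> CARD('n))^2 * (F (Suc n) - F (Suc k)))) * (\<Sum>j\<in>{k..n}. (\<alpha> j)^2)"
    using Bk_le_exp_sum_square[where \<alpha> = \<alpha> and F = F, OF s less_imp_le[OF pos] _ step _ F] by blast
  also have "\<dots> \<le> real CARD('m) * Ltilde A * condA (\<sigma> 1) (\<sigma> CARD('n)) * (\<sigma> 1)^2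
        * exp (- ((\<sigma> CARD('n))^2 * (F (Suc n) - F (Suc k))))
        * (a^2 / (2 * \<gamma> - 1) * (b + real k - 1) powr (1 - 2 * \<gamma>))"
    unfolding \<alpha>_def using pos assms(6,9,11)
    by (intro mult_left_mono sum_poly_step_square_le) (auto simp: condA_def)
  finally show ?thesis
    by (simp add: \<alpha>_def[abs_def] F_def exp_add[symmetric] algebra_simps)
qed

end
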